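(* Let $\alpha>0$, $\beta>0$, $D>0$, integers $T\ge1$ and $W\ge0$, and $2D\le L_T\le DT$. Let $X=[-D/2,D/2]$ and $x_0=0$. Set $\Delta=\lceil T/\lfloor L_T/D\rfloor\rceil$ and $K=\lceil T/\Delta\rceil$. Let $\theta_{k\Delta+1}$, $k=0,\dots,K-1$, be i.i.d. with $\mathbb P(\theta=D/2)=\mathbb P(\theta=-D/2)=1/2$, and let $\theta_t=\theta_{k\Delta+1}$ for $k\Delta+2\le t\le\min(k\Delta+\Delta,T)$. Let $f_t(x)=\frac\alpha2(x-\theta_t)^2$, and let $x^*=\arg\min_{x\in X^T}\sum_{t=1}^T\big(f_t(x_t)+\frac\beta2(x_t-x_{t-1})^2\big)$. Let $J=\{1\le t\le T-W:\ t+W\equiv1\pmod\Delta\}$. Then for any online deterministic algorithm $\mathcal A$ with prediction window $W$, $$\mathbb E|x_t^{\mathcal A}-x_t^*|^2\ge\frac{a_{t,t+W}^2D^2}{4}\qquad\text{for all }t\in J,$$ where $a_{t,s}$ denotes the $(t,s)$ entry of $A=H^{-1}$.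
   Context: Online deterministic algorithm with prediction window $W$: $x_t^{\mathcal A}=\mathcal A_t(I_t)$, where $\mathcal A_t$ is a deterministic map and $I_t$ consists of fixed initial knowledge together with $f_1,\dots,f_{\min(t+W-1,T)}$. Thus $x_t^{\mathcal A}$ is a deterministic function of $\theta_1,\dots,\theta_{\min(t+W-1,T)}$. $H\in\mathbb R^{T\times T}$ is the symmetric tridiagonal matrix with diagonal entries $1+2\beta/\alpha$ (except the last, which is $1+\beta/\alpha$) and off-diagonal entries $-\beta/\alpha$. It is invertible, and $x^*=H^{-1}\theta$. *)

theory Defs
  imports Complex_Main "HOL-Library.FuncSet"
begin

text \<open>Vectors/matrices indexed by 1..T are represented as functions on nat
(values outside 1..T are irrelevant / zero).\<close>

definition Hmat :: "real \<Rightarrow> real \<Rightarrow> nat \<Rightarrow> nat \<Rightarrow> nat \<Rightarrow> real" where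
  "Hmat \<alpha> \<beta> T i j =
     (if i \<in> {1..T} \<and> j \<in> {1..T} then
        (if i = j then (if i = T then 1 + \<beta>/\<alpha> else 1 + 2*\<beta>/\<alpha>)
         else if i = j + 1 \<or> j = i + 1 then - \<beta>/\<alpha> else 0)
      else 0)"

definition Hinv :: "real \<Rightarrow> real \<Rightarrow> nat \<Rightarrow> nat \<Rightarrow> nat \<Rightarrow> real" where
  "Hinv \<alpha> \<beta> T = (THE A. (\<forall>i j. A i j \<noteq> 0 \<longrightarrow> i \<in> {1..T} \<and> j \<in> {1..T}) \<and>
       (\<forall>i\<in>{1..T}. \<forall>j\<in>{1..T}. (\<Sum>k=1..T. Hmat \<alpha> \<beta> T i k * A k j) = (if i = j then 1 else 0)))"

definition total_cost :: "real \<Rightarrow> real \<Rightarrow> nat \<Rightarrow> (nat \<Rightarrow> real) \<Rightarrow> (nat \<Rightarrow> real) \<Rightarrow> real" where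
  "total_cost \<alpha> \<beta> T \<theta> x =
     (\<Sum>t=1..T. \<alpha>/2 * (x t - \<theta> t)^2 + \<beta>/2 * (x t - (if t = 1 then 0 else x (t-1)))^2)"

definition feasible :: "real \<Rightarrow> nat \<Rightarrow> (nat \<Rightarrow> real) set" where
  "feasible D T = {x. (\<forall>t\<in>{1..T}. \<bar>x t\<bar> \<le> D/2) \<and> (\<forall>t. t \<notin> {1..T} \<longrightarrow> x t = 0)}"

definition xstar :: "real \<Rightarrow> real \<Rightarrow> real \<Rightarrow> nat \<Rightarrow> (nat \<Rightarrow> real) \<Rightarrow> nat \<Rightarrow> real" where
  "xstar \<alpha> \<beta> D T \<theta> = (THE x. x \<in> feasible D T \<and>
      (\<forall>y\<in>feasible D T. total_cost \<alpha> \<beta> T \<theta> x \<le> total_cost \<alpha> \<beta> T \<theta> y))"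

definition online_alg :: "nat \<Rightarrow> nat \<Rightarrow> (nat \<Rightarrow> (nat \<Rightarrow> real) \<Rightarrow> real) \<Rightarrow> bool" where
  "online_alg T W alg \<longleftrightarrow> (\<forall>t \<theta> \<theta>'. (\<forall>s\<in>{1..min (t+W-1) T}. \<theta> s = \<theta>' s) \<longrightarrow> alg t \<theta> = alg t \<theta>')"

definition Delta :: "real \<Rightarrow> real \<Rightarrow> nat \<Rightarrow> nat" where
  "Delta D L T = nat \<lceil>real T / real_of_int \<lfloor>L / D\<rfloor>\<rceil>"

definition Kblocks :: "real \<Rightarrow> real \<Rightarrow> nat \<Rightarrow> nat" where
  "Kblocks D L T = nat \<lceil>real T / real (Delta D L T)\<rceil>"

definition theta_of :: "real \<Rightarrow> nat \<Rightarrow> nat \<Rightarrow> (nat \<Rightarrow> bool) \<Rightarrow> nat \<Rightarrow> real" where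
  "theta_of D T \<Delta> \<sigma> t =
     (if t \<in> {1..T} then (if \<sigma> ((t - 1) div \<Delta>) then D/2 else - D/2) else 0)"

text \<open>Expectation over K i.i.d. uniform signs: uniform average over all sign vectors.\<close>
definition sign_expect :: "nat \<Rightarrow> ((nat \<Rightarrow> bool) \<Rightarrow> real) \<Rightarrow> real" where
  "sign_expect K g = (\<Sum>\<sigma>\<in>PiE {..<K} (\<lambda>_. UNIV). g \<sigma>) / 2 ^ K"

end

theory Submission
  imports Defs
begin

text \<open>
  With \<open>c = \<beta>/\<alpha>\<close>, \<open>H = I + c L\<close> where \<open>L\<close> is a discrete Laplacian, so \<open>H\<close> satisfies a discrete
  maximum principle: \<open>H x \<le> B\<close> (with \<open>B \<ge> 0\<close>) forces \<open>x \<le> B\<close>. Consequently \<open>H\<^sup>-\<^sup>1\<close> is entrywise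
  nonnegative, and the unconstrained minimiser \<open>H\<^sup>-\<^sup>1\<theta>\<close> of the strongly convex total cost already
  lies in the box \<open>X\<^sup>T\<close>, so it is \<open>x\<^sup>*\<close>.
  For \<open>t \<in> J\<close> the index \<open>t + W\<close> starts a block. Flipping the sign of that block leaves
  \<open>\<theta>\<^sub>1, \<dots>, \<theta>\<^bsub>t+W-1\<^esub>\<close>, hence \<open>x\<^sub>t\<^sup>A\<close>, unchanged, while by nonnegativity of \<open>H\<^sup>-\<^sup>1\<close> it moves \<open>x\<^sub>t\<^sup>*\<close>
  by at least \<open>a\<^bsub>t,t+W\<^esub> D\<close>. Pairing every sign vector with its flip gives the bound.
\<close>

text \<open>Row \<open>i\<close> of \<open>H x\<close> for \<open>c = \<beta>/\<alpha>\<close>; the value \<open>x 0\<close> stands for \<open>x\<^sub>0\<close> and is \<open>0\<close> in every use.\<close>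
definition Happ :: "real \<Rightarrow> nat \<Rightarrow> (nat \<Rightarrow> real) \<Rightarrow> nat \<Rightarrow> real" where
  "Happ c T x i = x i + c * (x i - x (i - 1)) + (if i < T then c * (x i - x (i + 1)) else 0)"

lemma Hmat_mult_eq_Happ:
  assumes "\<alpha> > 0" "i \<in> {1..T}" "x 0 = 0"
  shows "(\<Sum>k=1..T. Hmat \<alpha> \<beta> T i k * x k) = Happ (\<beta>/\<alpha>) T x i"
proof -
  have "Hmat \<alpha> \<beta> T i k * x k =
      (if k = i then (if i = T then 1 + \<beta>/\<alpha> else 1 + 2*\<beta>/\<alpha>) * x i else 0)
      + (if k = i - 1 then -\<beta>/\<alpha> * x k else 0) + (if k = i + 1 then -\<beta>/\<alpha> * x k else 0)"
    if "k \<in> {1..T}" for k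
    using that assms by (auto simp: Hmat_def)
  then have "(\<Sum>k=1..T. Hmat \<alpha> \<beta> T i k * x k) =
      (if i = T then 1 + \<beta>/\<alpha> else 1 + 2*\<beta>/\<alpha>) * x i
      + (if i - 1 \<in> {1..T} then -\<beta>/\<alpha> * x (i - 1) else 0)
      + (if i + 1 \<in> {1..T} then -\<beta>/\<alpha> * x (i + 1) else 0)"
    using assms by (simp add: sum.distrib)
  moreover have "(if i - 1 \<in> {1..T} then -\<beta>/\<alpha> * x (i - 1) else 0) = -\<beta>/\<alpha> * x (i - 1)"
    using assms by (cases "i = 1") auto
  moreover have "(if i + 1 \<in> {1..T} then -\<beta>/\<alpha> * x (i + 1) else 0) =
      (if i < T then -\<beta>/\<alpha> * x (i + 1) else 0)"
    using assms by auto
  ultimately show ?thesis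
    using assms by (cases "i < T") (simp_all add: Happ_def algebra_simps)
qed

lemma Happ_diff: "Happ c T (\<lambda>k. f k - g k) i = Happ c T f i - Happ c T g i"
  by (simp add: Happ_def algebra_simps)

lemma Happ_uminus: "Happ c T (\<lambda>k. - f k) i = - Happ c T f i"
  by (simp add: Happ_def algebra_simps)

lemma Happ_mult: "Happ c T (\<lambda>k. a * f k) i = a * Happ c T f i"
  by (simp add: Happ_def algebra_simps)

lemma Happ_sum: "Happ c T (\<lambda>k. \<Sum>s\<in>S. f s k) i = (\<Sum>s\<in>S. Happ c T (f s) i)"
  by (cases "i < T")
    (simp_all add: Happ_def sum.distrib sum_subtractf sum_distrib_left right_diff_distrib sum_negf)

subsection \<open>Discrete maximum principle\<close>

lemma Happ_le_imp_le:
  assumes "c > 0" "x 0 = 0" "B \<ge> 0" "\<forall>i\<in>{1..T}. Happ c T x i \<le> B"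
  shows "\<forall>i\<in>{1..T}. x i \<le> B"
proof (rule ccontr)
  assume "\<not> ?thesis"
  then obtain j where j: "j \<in> {1..T}" "x j > B" by auto
  have "Max (x ` {1..T}) \<in> x ` {1..T}" using j(1) by (intro Max_in) auto
  then obtain i where i: "i \<in> {1..T}" "x i = Max (x ` {1..T})" by auto
  then have max: "\<forall>k\<in>{1..T}. x k \<le> x i" by simp
  have xi: "x i > B" using max j by fastforce
  have "x (i - 1) \<le> x i"
  proof (cases "i = 1")
    case False
    then have "i - 1 \<in> {1..T}" using i(1) by auto
    then show ?thesis using max by blast
  qed (use xi assms(2,3) in simp)
  moreover have "x (i + 1) \<le> x i" if "i < T" using max that by simp
  ultimately have "Happ c T x i \<ge> x i"
    using assms(1) by (simp add: Happ_def)
  moreover have "Happ c T x i \<le> B" using assms(4) i by blast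
  ultimately show False using xi by linarith
qed

lemma Happ_abs_le_imp_abs_le:
  assumes "c > 0" "x 0 = 0" "B \<ge> 0" "\<forall>i\<in>{1..T}. \<bar>Happ c T x i\<bar> \<le> B"
  shows "\<forall>i\<in>{1..T}. \<bar>x i\<bar> \<le> B"
proof -
  have "\<forall>i\<in>{1..T}. x i \<le> B"
    using Happ_le_imp_le[of c x B T] assms by (simp add: abs_le_iff)
  moreover have "\<forall>i\<in>{1..T}. - x i \<le> B"
    using Happ_le_imp_le[of c "\<lambda>k. - x k" B T] assms by (simp add: Happ_uminus abs_le_iff)
  ultimately show ?thesis by (simp add: abs_le_iff)
qed

lemma Happ_nonneg_imp_nonneg:
  assumes "c > 0" "x 0 = 0" "\<forall>i\<in>{1..T}. Happ c T x i \<ge> 0"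
  shows "\<forall>i\<in>{1..T}. x i \<ge> 0"
  using Happ_le_imp_le[of c "\<lambda>k. - x k" 0 T] assms by (simp add: Happ_uminus)

lemma Happ_zero_imp_zero:
  assumes "c > 0" "x 0 = 0" "\<forall>i\<in>{1..T}. Happ c T x i = 0"
  shows "\<forall>i\<in>{1..T}. x i = 0"
  using Happ_abs_le_imp_abs_le[of c x 0 T] assms by simp

text \<open>Thomas algorithm: forward elimination yields \<open>x\<^sub>i = g\<^sub>i x\<^bsub>i+1\<^esub> + h\<^sub>i\<close>, and back substitution
  starts from the last row; \<open>thomas_back c T \<theta> n\<close> is \<open>x\<^bsub>T-n\<^esub>\<close>.\<close>

fun thomas_gain :: "real \<Rightarrow> nat \<Rightarrow> real" where
  "thomas_gain c 0 = 0"
| "thomas_gain c (Suc i) = c / (1 + 2*c - c * thomas_gain c i)"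

fun thomas_offset :: "real \<Rightarrow> (nat \<Rightarrow> real) \<Rightarrow> nat \<Rightarrow> real" where
  "thomas_offset c \<theta> 0 = 0"
| "thomas_offset c \<theta> (Suc i) =
     (\<theta> (Suc i) + c * thomas_offset c \<theta> i) / (1 + 2*c - c * thomas_gain c i)"

fun thomas_back :: "real \<Rightarrow> nat \<Rightarrow> (nat \<Rightarrow> real) \<Rightarrow> nat \<Rightarrow> real" where
  "thomas_back c T \<theta> 0 =
     (\<theta> T + c * thomas_offset c \<theta> (T - 1)) / (1 + c - c * thomas_gain c (T - 1))"
| "thomas_back c T \<theta> (Suc n) =
     thomas_gain c (T - Suc n) * thomas_back c T \<theta> n + thomas_offset c \<theta> (T - Suc n)"

definition tridiag_solve :: "real \<Rightarrow> nat \<Rightarrow> (nat \<Rightarrow> real) \<Rightarrow> nat \<Rightarrow> real" where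
  "tridiag_solve c T \<theta> i = (if i \<in> {1..T} then thomas_back c T \<theta> (T - i) else 0)"

lemma thomas_gain_bounds: "c > 0 \<Longrightarrow> 0 \<le> thomas_gain c i \<and> thomas_gain c i < 1"
proof (induction i)
  case (Suc i)
  then have "c * thomas_gain c i < c" by simp
  then have "1 + 2*c - c * thomas_gain c i > c" by linarith
  with Suc.prems show ?case by simp
qed simp

lemma tridiag_solve_step:
  assumes "i < T"
  shows "tridiag_solve c T \<theta> i =
    thomas_gain c i * tridiag_solve c T \<theta> (i + 1) + thomas_offset c \<theta> i"
proof (cases "i = 0")
  case False
  have "T - i = Suc (T - Suc i)" using assms by simp
  then show ?thesis using assms False by (simp add: tridiag_solve_def)
qed (simp add: tridiag_solve_def)

lemma Happ_tridiag_solve: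
  assumes "c > 0" "i \<in> {1..T}"
  shows "Happ c T (tridiag_solve c T \<theta>) i = \<theta> i"
proof -
  let ?x = "tridiag_solve c T \<theta>"
  define g where "g = thomas_gain c (i - 1)"
  define h where "h = thomas_offset c \<theta> (i - 1)"
  have "c * g < c" using thomas_gain_bounds[OF assms(1)] assms(1) by (simp add: g_def)
  have "i - 1 < T" using assms(2) by auto
  then have prev: "?x (i - 1) = g * ?x i + h"
    using tridiag_solve_step[of "i - 1" T c \<theta>] assms(2) by (simp add: g_def h_def)
  show ?thesis
  proof (cases "i < T")
    case True
    define q where "q = 1 + 2*c - c * g"
    have "q > 0" using \<open>c * g < c\<close> assms(1) unfolding q_def by linarith
    have ii: "i = Suc (i - 1)" using assms by simp
    have "thomas_gain c i = c / q" by (subst ii) (simp add: q_def g_def)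
    moreover have "thomas_offset c \<theta> i = (\<theta> i + c*h) / q"
      by (subst ii, subst (2) ii) (simp add: q_def g_def h_def)
    ultimately have "?x i = c/q * ?x (i + 1) + (\<theta> i + c*h)/q"
      using tridiag_solve_step[OF True, of c \<theta>] by simp
    then have "q * ?x i = q * (c/q) * ?x (i + 1) + q * ((\<theta> i + c*h)/q)"
      by (simp only: distrib_left mult.assoc)
    then have "q * ?x i = c * ?x (i + 1) + \<theta> i + c*h"
      using \<open>q > 0\<close> by simp
    then show ?thesis using True prev by (simp add: Happ_def q_def algebra_simps)
  next
    case False
    then have iT: "i = T" using assms by simp
    have "1 + c - c * g > 0" using \<open>c * g < c\<close> assms(1) by linarith
    moreover have "?x T = (\<theta> T + c*h) / (1 + c - c * g)"
      using assms iT by (simp add: tridiag_solve_def g_def h_def)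
    ultimately have "(1 + c - c * g) * ?x T = \<theta> T + c*h" by (simp add: field_simps)
    then show ?thesis using prev iT by (simp add: Happ_def algebra_simps)
  qed
qed

subsection \<open>The inverse \<open>A = H\<^sup>-\<^sup>1\<close>\<close>

definition Ainv :: "real \<Rightarrow> nat \<Rightarrow> nat \<Rightarrow> nat \<Rightarrow> real" where
  "Ainv c T t j = (if j \<in> {1..T} then tridiag_solve c T (\<lambda>s. if s = j then 1 else 0) t else 0)"

lemma Ainv_nonzero_imp: "Ainv c T t j \<noteq> 0 \<Longrightarrow> t \<in> {1..T} \<and> j \<in> {1..T}"
  by (auto simp: Ainv_def tridiag_solve_def split: if_splits)

lemma Happ_Ainv_column:
  assumes "c > 0" "i \<in> {1..T}" "j \<in> {1..T}"
  shows "Happ c T (\<lambda>k. Ainv c T k j) i = (if i = j then 1 else 0)"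
  using Happ_tridiag_solve[OF assms(1,2), of "\<lambda>s. if s = j then 1 else 0"] assms(3)
  by (simp add: Ainv_def)

lemma Ainv_nonneg:
  assumes "c > 0"
  shows "Ainv c T t j \<ge> 0"
proof (cases "t \<in> {1..T} \<and> j \<in> {1..T}")
  case True
  have "Ainv c T 0 j = 0" using Ainv_nonzero_imp by fastforce
  then have "\<forall>i\<in>{1..T}. Ainv c T i j \<ge> 0"
    using Happ_nonneg_imp_nonneg[of c "\<lambda>k. Ainv c T k j" T] Happ_Ainv_column[OF assms] True
    by (simp add: assms)
  then show ?thesis using True by blast
qed (metis Ainv_nonzero_imp order_refl)

lemma Hmat_mult_Ainv:
  assumes "\<alpha> > 0" "\<beta> > 0" "i \<in> {1..T}" "j \<in> {1..T}"
  shows "(\<Sum>k=1..T. Hmat \<alpha> \<beta> T i k * Ainv (\<beta>/\<alpha>) T k j) = (if i = j then 1 else 0)"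
  using Hmat_mult_eq_Happ[OF assms(1,3), of "\<lambda>k. Ainv (\<beta>/\<alpha>) T k j"]
    Happ_Ainv_column[OF _ assms(3,4)] Ainv_nonzero_imp[of _ T 0 j] assms(1,2)
  by fastforce

lemma Hinv_eq_Ainv:
  assumes "\<alpha> > 0" "\<beta> > 0"
  shows "Hinv \<alpha> \<beta> T = Ainv (\<beta>/\<alpha>) T"
  unfolding Hinv_def
proof (rule the_equality; (elim conjE)?)
  show "(\<forall>i j. Ainv (\<beta>/\<alpha>) T i j \<noteq> 0 \<longrightarrow> i \<in> {1..T} \<and> j \<in> {1..T}) \<and>
      (\<forall>i\<in>{1..T}. \<forall>j\<in>{1..T}.
         (\<Sum>k=1..T. Hmat \<alpha> \<beta> T i k * Ainv (\<beta>/\<alpha>) T k j) = (if i = j then 1 else 0))"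
    using Ainv_nonzero_imp Hmat_mult_Ainv[OF assms] by blast
next
  fix A
  assume supp: "\<forall>i j. A i j \<noteq> 0 \<longrightarrow> i \<in> {1..T} \<and> j \<in> {1..T}"
    and inv: "\<forall>i\<in>{1..T}. \<forall>j\<in>{1..T}.
      (\<Sum>k=1..T. Hmat \<alpha> \<beta> T i k * A k j) = (if i = j then 1 else 0)"
  have c: "\<beta>/\<alpha> > 0" using assms by simp
  have "A i j = Ainv (\<beta>/\<alpha>) T i j" if ij: "i \<in> {1..T}" "j \<in> {1..T}" for i j
  proof -
    have A0: "A 0 j = 0" using supp by fastforce
    have "Happ (\<beta>/\<alpha>) T (\<lambda>k. A k j - Ainv (\<beta>/\<alpha>) T k j) l = 0" if l: "l \<in> {1..T}" for l
      using Hmat_mult_eq_Happ[where x="\<lambda>k. A k j" and \<beta>=\<beta>, OF assms(1) l A0] inv l ij(2)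
        Happ_Ainv_column[OF c l ij(2)]
      by (simp add: Happ_diff)
    then show ?thesis
      using Happ_zero_imp_zero[OF c, of "\<lambda>k. A k j - Ainv (\<beta>/\<alpha>) T k j" T] A0 ij
        Ainv_nonzero_imp[of _ T 0 j] by fastforce
  qed
  then show "A = Ainv (\<beta>/\<alpha>) T"
    using supp Ainv_nonzero_imp by (intro ext) (metis)
qed

definition Amult :: "real \<Rightarrow> nat \<Rightarrow> (nat \<Rightarrow> real) \<Rightarrow> nat \<Rightarrow> real" where
  "Amult c T \<theta> t = (\<Sum>s=1..T. Ainv c T t s * \<theta> s)"

lemma Amult_outside: "t \<notin> {1..T} \<Longrightarrow> Amult c T \<theta> t = 0"
  unfolding Amult_def by (rule sum.neutral) (use Ainv_nonzero_imp[of c T t] in auto)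

lemma Happ_Amult:
  assumes "c > 0" "i \<in> {1..T}"
  shows "Happ c T (Amult c T \<theta>) i = \<theta> i"
proof -
  have "Happ c T (Amult c T \<theta>) i = (\<Sum>s=1..T. Happ c T (\<lambda>t. \<theta> s * Ainv c T t s) i)"
    unfolding Amult_def by (subst Happ_sum[symmetric]) (simp add: mult.commute)
  also have "\<dots> = (\<Sum>s=1..T. \<theta> s * (if i = s then 1 else 0))"
    by (rule sum.cong[OF refl]) (simp add: Happ_mult Happ_Ainv_column[OF assms])
  also have "\<dots> = \<theta> i" using assms(2) by (simp add: if_distrib cong: if_cong)
  finally show ?thesis .
qed

subsection \<open>The offline optimum\<close>

lemma summation_by_parts_Happ:
  fixes z e :: "nat \<Rightarrow> real"
  assumes "e 0 = 0"
  shows "(\<Sum>t=1..T. (z t - z (t - 1)) * (e t - e (t - 1))) =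
    (\<Sum>t=1..T. e t * ((z t - z (t - 1)) + (if t < T then z t - z (t + 1) else 0)))"
proof -
  have open_end: "(\<Sum>t=1..n. (z t - z (t - 1)) * (e t - e (t - 1))) =
      (\<Sum>t=1..n. e t * (2 * z t - z (t - 1) - z (t + 1))) + e n * (z (n + 1) - z n)" for n
    by (induction n) (simp_all add: assms algebra_simps)
  have "(\<Sum>t=1..T. e t * (2 * z t - z (t - 1) - z (t + 1))) =
      (\<Sum>t=1..T. e t * ((z t - z (t - 1)) + (if t < T then z t - z (t + 1) else 0))
         + (if t = T then e t * (z t - z (t + 1)) else 0))"
    by (rule sum.cong[OF refl]) (auto simp: algebra_simps)
  also have "\<dots> = (\<Sum>t=1..T. e t * ((z t - z (t - 1)) + (if t < T then z t - z (t + 1) else 0)))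
      + (if T \<ge> 1 then e T * (z T - z (T + 1)) else 0)"
    by (simp add: sum.distrib)
  finally show ?thesis
    using open_end[of T] assms by (cases "T = 0") (auto simp: algebra_simps)
qed

lemma total_cost_minus_stationary_ge:
  assumes "\<alpha> > 0" "\<beta> > 0" "z 0 = 0" "y 0 = 0"
    and stationary: "\<forall>i\<in>{1..T}. Happ (\<beta>/\<alpha>) T z i = \<theta> i"
  shows "total_cost \<alpha> \<beta> T \<theta> y - total_cost \<alpha> \<beta> T \<theta> z \<ge> \<alpha>/2 * (\<Sum>t=1..T. (y t - z t)^2)"
proof -
  define e where "e t = y t - z t" for t
  define grad where "grad t = \<alpha> * (z t - \<theta> t) * e t + \<beta> * ((z t - z (t - 1)) * (e t - e (t - 1)))" for t
  have cost: "total_cost \<alpha> \<beta> T \<theta> x =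
      (\<Sum>t=1..T. \<alpha>/2 * (x t - \<theta> t)^2 + \<beta>/2 * (x t - x (t - 1))^2)" if "x 0 = 0" for x
    unfolding total_cost_def using that by (intro sum.cong) auto
  have pointwise: "(\<alpha>/2 * (y t - \<theta> t)^2 + \<beta>/2 * (y t - y (t - 1))^2)
      - (\<alpha>/2 * (z t - \<theta> t)^2 + \<beta>/2 * (z t - z (t - 1))^2)
      = grad t + \<alpha>/2 * (e t)^2 + \<beta>/2 * (e t - e (t - 1))^2" for t
    by (simp add: grad_def e_def power2_eq_square algebra_simps)
  define F where "F t = (z t - z (t - 1)) + (if t < T then z t - z (t + 1) else 0)" for t
  have "\<alpha> * (z t - \<theta> t) * e t + \<beta> * (e t * F t) = 0" if "t \<in> {1..T}" for t
  proof -
    have "\<alpha> * Happ (\<beta>/\<alpha>) T z t = \<alpha> * z t + \<beta> * F t"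
      using assms(1) by (cases "t < T") (simp_all add: Happ_def F_def field_simps)
    then have "\<alpha> * (z t - \<theta> t) * e t + \<beta> * (e t * F t) = e t * (\<alpha> * Happ (\<beta>/\<alpha>) T z t - \<alpha> * \<theta> t)"
      by (simp add: algebra_simps)
    then show ?thesis using stationary that by simp
  qed
  then have "(\<Sum>t=1..T. \<alpha> * (z t - \<theta> t) * e t + \<beta> * (e t * F t)) = 0"
    by simp
  moreover have "(\<Sum>t=1..T. grad t) =
      (\<Sum>t=1..T. \<alpha> * (z t - \<theta> t) * e t) + \<beta> * (\<Sum>t=1..T. (z t - z (t - 1)) * (e t - e (t - 1)))"
    by (simp add: grad_def sum.distrib sum_distrib_left)
  moreover have "(\<Sum>t=1..T. (z t - z (t - 1)) * (e t - e (t - 1))) = (\<Sum>t=1..T. e t * F t)"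
    using summation_by_parts_Happ[of e z T] assms(3,4) by (simp add: F_def e_def)
  ultimately have "(\<Sum>t=1..T. grad t) = 0"
    by (simp add: sum.distrib flip: sum_distrib_left)
  have "total_cost \<alpha> \<beta> T \<theta> y - total_cost \<alpha> \<beta> T \<theta> z =
      (\<Sum>t=1..T. grad t) + (\<Sum>t=1..T. \<alpha>/2 * (e t)^2) + (\<Sum>t=1..T. \<beta>/2 * (e t - e (t - 1))^2)"
  proof -
    have "total_cost \<alpha> \<beta> T \<theta> y - total_cost \<alpha> \<beta> T \<theta> z =
        (\<Sum>t=1..T. (\<alpha>/2 * (y t - \<theta> t)^2 + \<beta>/2 * (y t - y (t - 1))^2)
          - (\<alpha>/2 * (z t - \<theta> t)^2 + \<beta>/2 * (z t - z (t - 1))^2))"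
      using assms(3,4) by (simp only: cost sum_subtractf)
    then show ?thesis by (simp only: pointwise sum.distrib)
  qed
  moreover have "(\<Sum>t=1..T. \<beta>/2 * (e t - e (t - 1))^2) \<ge> 0"
    using assms(2) by (simp add: sum_nonneg)
  ultimately show ?thesis
    using \<open>(\<Sum>t=1..T. grad t) = 0\<close> by (simp add: e_def sum_distrib_left)
qed

lemma Amult_feasible:
  assumes "c > 0" "D > 0" "\<forall>t\<in>{1..T}. \<bar>\<theta> t\<bar> \<le> D/2"
  shows "Amult c T \<theta> \<in> feasible D T"
  using Happ_abs_le_imp_abs_le[of c "Amult c T \<theta>" "D/2" T] assms Happ_Amult Amult_outside
  unfolding feasible_def by auto

lemma xstar_eq_Amult:
  assumes "\<alpha> > 0" "\<beta> > 0" "D > 0" "\<forall>t\<in>{1..T}. \<bar>\<theta> t\<bar> \<le> D/2"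
  shows "xstar \<alpha> \<beta> D T \<theta> = Amult (\<beta>/\<alpha>) T \<theta>"
  unfolding xstar_def
proof (rule the_equality; (elim conjE)?)
  let ?z = "Amult (\<beta>/\<alpha>) T \<theta>"
  have c: "\<beta>/\<alpha> > 0" using assms by simp
  have feas: "?z \<in> feasible D T" using Amult_feasible[OF c assms(3,4)] .
  have gap: "total_cost \<alpha> \<beta> T \<theta> y - total_cost \<alpha> \<beta> T \<theta> ?z \<ge> \<alpha>/2 * (\<Sum>t=1..T. (y t - ?z t)^2)"
    if "y \<in> feasible D T" for y
    using that total_cost_minus_stationary_ge[OF assms(1,2)] Happ_Amult[OF c] Amult_outside
    by (simp add: feasible_def)
  have sq_nonneg: "0 \<le> \<alpha>/2 * (\<Sum>t=1..T. (y t - ?z t)^2)" for y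
    using assms(1) by (simp add: sum_nonneg)
  show "?z \<in> feasible D T \<and> (\<forall>y\<in>feasible D T. total_cost \<alpha> \<beta> T \<theta> ?z \<le> total_cost \<alpha> \<beta> T \<theta> y)"
  proof (intro conjI ballI feas)
    fix y assume "y \<in> feasible D T"
    then show "total_cost \<alpha> \<beta> T \<theta> ?z \<le> total_cost \<alpha> \<beta> T \<theta> y"
      using gap sq_nonneg[of y] by fastforce
  qed
  fix x
  assume x: "x \<in> feasible D T" and "\<forall>y\<in>feasible D T. total_cost \<alpha> \<beta> T \<theta> x \<le> total_cost \<alpha> \<beta> T \<theta> y"
  then have "\<alpha>/2 * (\<Sum>t=1..T. (x t - ?z t)^2) \<le> 0"
    using gap[OF x] feas by force
  then have "(\<Sum>t=1..T. (x t - ?z t)^2) = 0"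
    using assms(1) by (simp add: mult_le_0_iff order_antisym sum_nonneg)
  then have "\<forall>t\<in>{1..T}. x t = ?z t"
    by (subst (asm) sum_nonneg_eq_0_iff) auto
  moreover have "x t = 0" "?z t = 0" if "t \<notin> {1..T}" for t
    using x that Amult_outside unfolding feasible_def by auto
  ultimately show "x = ?z" by fastforce
qed

subsection \<open>Random block signs\<close>

lemma sign_expect_ge_if_flip:
  assumes "k < K" and flip: "\<And>\<sigma>. g \<sigma> + g (\<sigma>(k := \<not> \<sigma> k)) \<ge> m"
  shows "sign_expect K g \<ge> m / 2"
proof -
  define P where "P = PiE {..<K} (\<lambda>_. UNIV :: bool set)"
  define flp where "flp \<sigma> = \<sigma>(k := \<not> \<sigma> k)" for \<sigma> :: "nat \<Rightarrow> bool"
  have "flp \<sigma> \<in> P" if "\<sigma> \<in> P" for \<sigma>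
    using that assms(1) by (auto simp: P_def flp_def PiE_def extensional_def)
  then have "(\<Sum>\<sigma>\<in>P. g (flp \<sigma>)) = (\<Sum>\<sigma>\<in>P. g \<sigma>)"
    by (intro sum.reindex_bij_witness[where i=flp and j=flp]) (auto simp: flp_def)
  then have "2 * (\<Sum>\<sigma>\<in>P. g \<sigma>) = (\<Sum>\<sigma>\<in>P. g \<sigma> + g (flp \<sigma>))"
    by (simp add: sum.distrib)
  also have "\<dots> \<ge> 2^K * m"
    using sum_mono[of P "\<lambda>_. m"] flip by (simp add: flp_def P_def card_PiE)
  finally show ?thesis by (simp add: sign_expect_def P_def field_simps)
qed

lemma Delta_pos:
  assumes "D > 0" "2 * D \<le> L" "T \<ge> 1"
  shows "Delta D L T > 0"
proof -
  have "2 \<le> \<lfloor>L / D\<rfloor>" using assms by (simp add: le_floor_iff le_divide_eq)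
  then have "real T / real_of_int \<lfloor>L / D\<rfloor> > 0" using assms(3) by simp
  then show ?thesis by (simp add: Delta_def)
qed

lemma block_index_less_Kblocks:
  assumes "Delta D L T > 0" "s \<in> {1..T}"
  shows "(s - 1) div Delta D L T < Kblocks D L T"
proof -
  let ?\<Delta> = "Delta D L T" and ?k = "(s - 1) div Delta D L T"
  have "?k * ?\<Delta> \<le> s - 1" by (rule div_times_less_eq_dividend)
  then have "?k * ?\<Delta> < T" using assms(2) unfolding atLeastAtMost_iff by linarith
  then have "real ?k < real T / real ?\<Delta>"
    using assms(1) by (simp add: field_simps flip: of_nat_mult)
  then have "int ?k < \<lceil>real T / real ?\<Delta>\<rceil>" by (simp add: less_ceiling_iff)
  then show ?thesis unfolding Kblocks_def by linarith
qed

lemma theta_of_fun_upd_other_block: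
  "(s - 1) div \<Delta> \<noteq> k \<Longrightarrow> theta_of D T \<Delta> (\<sigma>(k := b)) s = theta_of D T \<Delta> \<sigma> s"
  by (simp add: theta_of_def)

lemma theta_of_bounded: "D > 0 \<Longrightarrow> \<forall>s\<in>{1..T}. \<bar>theta_of D T \<Delta> \<sigma> s\<bar> \<le> D/2"
  by (simp add: theta_of_def)

text \<open>The flip changes \<open>\<theta>\<close> by the same \<open>\<plusminus>D\<close> on the whole block; as \<open>A \<ge> 0\<close> the contributions
  cannot cancel, so keeping only the entry \<open>s\<close> gives a lower bound.\<close>
lemma Amult_theta_flip_ge:
  fixes \<Delta> :: nat
  assumes "c > 0" "D > 0" "s \<in> {1..T}"
  defines "k \<equiv> (s - 1) div \<Delta>"
  shows "\<bar>Amult c T (theta_of D T \<Delta> \<sigma>) t - Amult c T (theta_of D T \<Delta> (\<sigma>(k := \<not> \<sigma> k))) t\<bar>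
    \<ge> D * Ainv c T t s"
proof -
  define block where "block s' = (if (s' - 1) div \<Delta> = k then 1 else 0 :: real)" for s'
  define S where "S = (\<Sum>s'=1..T. Ainv c T t s' * block s')"
  have "theta_of D T \<Delta> \<sigma> s' - theta_of D T \<Delta> (\<sigma>(k := \<not> \<sigma> k)) s' =
      (if \<sigma> k then D else -D) * block s'" if "s' \<in> {1..T}" for s'
    using that by (auto simp: theta_of_def block_def)
  then have "Amult c T (theta_of D T \<Delta> \<sigma>) t - Amult c T (theta_of D T \<Delta> (\<sigma>(k := \<not> \<sigma> k))) t
      = (if \<sigma> k then D else -D) * S"
    by (simp add: Amult_def S_def sum_distrib_left flip: sum_subtractf right_diff_distrib)
      (simp add: algebra_simps)
  moreover have "Ainv c T t s * block s \<le> S"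
    unfolding S_def using assms(3) Ainv_nonneg[OF assms(1)]
    by (intro member_le_sum) (auto simp: block_def)
  ultimately show ?thesis
    using assms(2) by (simp add: block_def k_def abs_mult)
qed

lemma half_sq_diff_le_sum_sq: "((p::real) - q)^2 / 2 \<le> (u - p)^2 + (u - q)^2"
proof -
  have "2 * ((u - p)^2 + (u - q)^2) - (p - q)^2 = (2*u - p - q)^2"
    by (simp add: power2_eq_square algebra_simps)
  then have "(p - q)^2 \<le> 2 * ((u - p)^2 + (u - q)^2)"
    using zero_le_power2[of "2*u - p - q"] by linarith
  then show ?thesis by simp
qed

theorem lemma6:
  fixes \<alpha> \<beta> D L :: real and T W :: nat
    and alg :: "nat \<Rightarrow> (nat \<Rightarrow> real) \<Rightarrow> real"
  assumes "\<alpha> > 0" and "\<beta> > 0" and "D > 0" and "T \<ge> 1"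
    and "2 * D \<le> L" and "L \<le> D * real T"
    and "online_alg T W alg"
  shows "\<forall>t \<in> {t. 1 \<le> t \<and> t \<le> T - W \<and> (t + W) mod Delta D L T = 1 mod Delta D L T}.
           sign_expect (Kblocks D L T)
             (\<lambda>\<sigma>. (alg t (theta_of D T (Delta D L T) \<sigma>)
                    - xstar \<alpha> \<beta> D T (theta_of D T (Delta D L T) \<sigma>) t)^2)
           \<ge> (Hinv \<alpha> \<beta> T t (t + W))^2 * D^2 / 4"
proof (intro ballI)
  fix t assume "t \<in> {t. 1 \<le> t \<and> t \<le> T - W \<and> (t + W) mod Delta D L T = 1 mod Delta D L T}"
  then have t: "t \<ge> 1" "t + W \<in> {1..T}" and "(t + W) mod Delta D L T = 1 mod Delta D L T" by auto
  let ?\<Delta> = "Delta D L T" and ?c = "\<beta>/\<alpha>"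
  let ?\<theta> = "theta_of D T ?\<Delta>" and ?a = "Ainv ?c T t (t + W)"
  define k where "k = (t + W - 1) div ?\<Delta>"
  define x where "x \<sigma> = Amult ?c T (?\<theta> \<sigma>) t" for \<sigma>
  define g where "g = (\<lambda>\<sigma>. (alg t (?\<theta> \<sigma>) - x \<sigma>)^2)"
  have "?\<Delta> > 0" using Delta_pos assms by blast
  then have "k * ?\<Delta> = t + W - 1"
    using \<open>(t + W) mod ?\<Delta> = 1 mod ?\<Delta>\<close> mod_eq_dvd_iff_nat[of 1 "t + W"] t(1) by (simp add: k_def)
  then have "(s - 1) div ?\<Delta> < k" if "s \<in> {1..min (t + W - 1) T}" for s
    using that by (intro less_mult_imp_div_less) auto
  then have same_alg: "alg t (?\<theta> (\<sigma>(k := \<not> \<sigma> k))) = alg t (?\<theta> \<sigma>)" for \<sigma>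
    using assms(7) theta_of_fun_upd_other_block unfolding online_alg_def by (metis less_irrefl)
  have pair: "(?a * D)^2 / 2 \<le> g \<sigma> + g (\<sigma>(k := \<not> \<sigma> k))" for \<sigma>
  proof -
    have "?a * D \<le> \<bar>x \<sigma> - x (\<sigma>(k := \<not> \<sigma> k))\<bar>"
      using Amult_theta_flip_ge[of ?c D "t + W" T] assms t by (simp add: x_def k_def mult.commute)
    moreover have "0 \<le> ?a * D" using Ainv_nonneg[of ?c] assms by simp
    ultimately have "(?a * D)^2 \<le> \<bar>x \<sigma> - x (\<sigma>(k := \<not> \<sigma> k))\<bar>^2"
      by (rule power_mono)
    then show ?thesis
      using half_sq_diff_le_sum_sq[of "x \<sigma>" "x (\<sigma>(k := \<not> \<sigma> k))" "alg t (?\<theta> \<sigma>)"]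
      unfolding g_def same_alg power2_abs by linarith
  qed
  have "k < Kblocks D L T"
    using block_index_less_Kblocks[OF \<open>?\<Delta> > 0\<close> t(2)] by (simp add: k_def)
  from sign_expect_ge_if_flip[where g=g, OF this pair]
  have "sign_expect (Kblocks D L T) g \<ge> (?a * D)^2 / 4" by simp
  then show "sign_expect (Kblocks D L T) (\<lambda>\<sigma>. (alg t (?\<theta> \<sigma>) - xstar \<alpha> \<beta> D T (?\<theta> \<sigma>) t)^2)
      \<ge> (Hinv \<alpha> \<beta> T t (t + W))^2 * D^2 / 4"
    using xstar_eq_Amult[OF assms(1-3) theta_of_bounded[OF assms(3)]] Hinv_eq_Ainv[OF assms(1,2)]
    by (simp add: g_def x_def power_mult_distrib)
qed

end
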